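(* Let $\mathcal{H}$ be a separable Hilbert space, $\epsilon_1,\ldots,\epsilon_n$ $\mathcal{H}$-valued random elements with $E\|\epsilon_i\|^2<\infty$, $W_{n1},\ldots,W_{nn}\ge0$ deterministic weights, $\eta_i=W_{ni}\epsilon_i$, $S_n=\sum_{i=1}^n\eta_i$, $\mathcal{G}_i=\sigma(\epsilon_1,\ldots,\epsilon_i)$ ($\mathcal{G}_0$ trivial), and $m\ge1$ an integer. For $1\le i\le n$ let $T_i=S_n-\sum_{j=i}^{\min(i+m-1,n)}\eta_j$ and $d_i=E[\|S_n\|\mid\mathcal{G}_i]-E[\|S_n\|\mid\mathcal{G}_{i-1}]-E[\|T_i\|\mid\mathcal{G}_i]+E[\|T_i\|\mid\mathcal{G}_{i-1}]$. Then $|d_i|\le\sum_{j=i}^{i+m-1}E(\|\eta_j\|\mid\mathcal{G}_i)+\sum_{j=i}^{i+m-1}E(\|\eta_j\|\mid\mathcal{G}_{i-1})$ and $E(d_i^2\mid\mathcal{G}_{i-1})\le m\sum_{j=i}^{i+m-1}E(\|\eta_j\|^2\mid\mathcal{G}_{i-1})$, where sums over $j$ are truncated at $n$. *)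

theory Defs
  imports "HOL-Probability.Probability"
begin

definition nat_filtration :: "'a measure \<Rightarrow> (nat \<Rightarrow> 'a \<Rightarrow> 'h::topological_space) \<Rightarrow> nat \<Rightarrow> 'a measure" where
  "nat_filtration M eps i =
     sigma (space M) (\<Union>j\<in>{1..i}. {eps j -` A \<inter> space M | A. A \<in> sets borel})"

end

theory Submission
  imports Defs
begin

text \<open>
  Put \<open>D = \<parallel>S\<^sub>n\<parallel> - \<parallel>T\<^sub>i\<parallel>\<close>, \<open>G = \<sigma>(\<epsilon>\<^sub>1, \<dots>, \<epsilon>\<^sub>i)\<close> and \<open>F = \<sigma>(\<epsilon>\<^sub>1, \<dots>, \<epsilon>\<^sub>i\<^sub>-\<^sub>1) \<subseteq> G\<close>, so that
  \<open>d\<^sub>i = E[D|G] - E[D|F]\<close>. By the reverse triangle inequality \<open>\<bar>D\<bar> \<le> Z = \<Sum>\<^sub>j \<parallel>\<eta>\<^sub>j\<parallel>\<close>,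
  where \<open>j\<close> ranges over the at most \<open>m\<close> indices removed from \<open>S\<^sub>n\<close>; monotonicity of conditional
  expectation gives the first bound. For the second, the tower property \<open>E[E[D|G]|F] = E[D|F]\<close>
  turns \<open>E[d\<^sub>i\<^sup>2|F]\<close> into the conditional variance \<open>E[E[D|G]\<^sup>2|F] - E[D|F]\<^sup>2\<close>, which by
  conditional Jensen is at most \<open>E[D\<^sup>2|F] \<le> E[Z\<^sup>2|F]\<close>; Cauchy-Schwarz gives \<open>Z\<^sup>2 \<le> m \<Sum>\<^sub>j \<parallel>\<eta>\<^sub>j\<parallel>\<^sup>2\<close>.
\<close>

lemma abs_norm_minus_sum_le:
  fixes f :: "'i \<Rightarrow> 'b::real_normed_vector"
  shows "\<bar>norm a - norm (a - (\<Sum>j\<in>J. f j))\<bar> \<le> (\<Sum>j\<in>J. norm (f j))"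
proof -
  have "\<bar>norm a - norm (a - (\<Sum>j\<in>J. f j))\<bar> \<le> norm (\<Sum>j\<in>J. f j)"
    using norm_triangle_ineq3[of a "a - (\<Sum>j\<in>J. f j)"] by simp
  also have "\<dots> \<le> (\<Sum>j\<in>J. norm (f j))"
    by (rule norm_sum)
  finally show ?thesis .
qed

lemma integrable_sum_squared:
  fixes Y :: "'i \<Rightarrow> 'a \<Rightarrow> real"
  assumes "\<And>j. j \<in> J \<Longrightarrow> Y j \<in> borel_measurable M"
    and "\<And>j. j \<in> J \<Longrightarrow> integrable M (\<lambda>x. (Y j x)\<^sup>2)"
  shows "integrable M (\<lambda>x. (\<Sum>j\<in>J. Y j x)\<^sup>2)"
proof (rule Bochner_Integration.integrable_bound)
  show "integrable M (\<lambda>x. (\<Sum>j\<in>J. (Y j x)\<^sup>2) * card J)"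
    using assms(2) by auto
  show "AE x in M. norm ((\<Sum>j\<in>J. Y j x)\<^sup>2) \<le> norm ((\<Sum>j\<in>J. (Y j x)\<^sup>2) * card J)"
    using sum_squared_le_sum_of_squares by (intro AE_I2) (simp add: sum_nonneg)
qed (use assms(1) in auto)

lemma integrable_norm_sum:
  fixes f :: "'i \<Rightarrow> 'a \<Rightarrow> 'b::{real_normed_vector, second_countable_topology}"
  assumes "\<And>j. j \<in> J \<Longrightarrow> f j \<in> borel_measurable M"
    and "\<And>j. j \<in> J \<Longrightarrow> integrable M (\<lambda>x. norm (f j x))"
  shows "integrable M (\<lambda>x. norm (\<Sum>j\<in>J. f j x))"
proof (rule Bochner_Integration.integrable_bound)
  show "integrable M (\<lambda>x. \<Sum>j\<in>J. norm (f j x))"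
    using assms(2) by auto
  show "AE x in M. norm (norm (\<Sum>j\<in>J. f j x)) \<le> norm (\<Sum>j\<in>J. norm (f j x))"
    by (intro AE_I2) (simp add: norm_sum sum_nonneg)
qed (use assms(1) in auto)

context sigma_finite_subalgebra
begin

lemma real_cond_exp_abs_le:
  assumes X: "integrable M X" and Z: "integrable M Z"
    and le: "\<And>x. x \<in> space M \<Longrightarrow> \<bar>X x\<bar> \<le> Z x"
  shows "AE x in M. \<bar>real_cond_exp M F X x\<bar> \<le> real_cond_exp M F Z x"
proof -
  have "AE x in M. real_cond_exp M F X x \<le> real_cond_exp M F Z x"
    using le by (intro real_cond_exp_mono AE_I2 X Z) (force simp: abs_le_iff)
  moreover have "AE x in M. real_cond_exp M F (\<lambda>x. - Z x) x \<le> real_cond_exp M F X x"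
    using le by (intro real_cond_exp_mono AE_I2 X Z integrable_minus) (force simp: abs_le_iff)+
  moreover have "AE x in M. real_cond_exp M F (\<lambda>x. - Z x) x = - real_cond_exp M F Z x"
    using real_cond_exp_cmult[OF Z, of "-1"] by simp
  ultimately show ?thesis by eventually_elim auto
qed

lemma real_cond_exp_sum_on:
  assumes "\<And>j. j \<in> J \<Longrightarrow> integrable M (Y j)"
  shows "AE x in M. real_cond_exp M F (\<lambda>x. \<Sum>j\<in>J. Y j x) x = (\<Sum>j\<in>J. real_cond_exp M F (Y j) x)"
proof -
  define Y' where "Y' j = (if j \<in> J then Y j else (\<lambda>_. 0))" for j
  have "AE x in M. real_cond_exp M F (\<lambda>x. \<Sum>j\<in>J. Y' j x) x = (\<Sum>j\<in>J. real_cond_exp M F (Y' j) x)"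
    using assms by (intro real_cond_exp_sum) (simp add: Y'_def)
  then show ?thesis by (simp add: Y'_def cong: sum.cong)
qed

lemma real_cond_exp_sum_squared_le:
  assumes "card J \<le> m"
    and meas: "\<And>j. j \<in> J \<Longrightarrow> Y j \<in> borel_measurable M"
    and sq: "\<And>j. j \<in> J \<Longrightarrow> integrable M (\<lambda>x. (Y j x)\<^sup>2)"
  shows "AE x in M. real_cond_exp M F (\<lambda>x. (\<Sum>j\<in>J. Y j x)\<^sup>2) x
                    \<le> real m * (\<Sum>j\<in>J. real_cond_exp M F (\<lambda>x. (Y j x)\<^sup>2) x)"
proof -
  have cauchy_schwarz: "(\<Sum>j\<in>J. Y j x)\<^sup>2 \<le> real m * (\<Sum>j\<in>J. (Y j x)\<^sup>2)" for x
  proof -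
    have "(\<Sum>j\<in>J. Y j x)\<^sup>2 \<le> (\<Sum>j\<in>J. (Y j x)\<^sup>2) * card J"
      by (rule sum_squared_le_sum_of_squares)
    also have "\<dots> \<le> (\<Sum>j\<in>J. (Y j x)\<^sup>2) * m"
      using assms(1) by (intro mult_left_mono sum_nonneg) auto
    finally show ?thesis by (simp add: mult.commute)
  qed
  have "AE x in M. real_cond_exp M F (\<lambda>x. (\<Sum>j\<in>J. Y j x)\<^sup>2) x
               \<le> real_cond_exp M F (\<lambda>x. real m * (\<Sum>j\<in>J. (Y j x)\<^sup>2)) x"
    using cauchy_schwarz meas sq by (intro real_cond_exp_mono AE_I2 integrable_sum_squared) auto
  moreover have "AE x in M. real_cond_exp M F (\<lambda>x. real m * (\<Sum>j\<in>J. (Y j x)\<^sup>2)) x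
                   = real m * real_cond_exp M F (\<lambda>x. \<Sum>j\<in>J. (Y j x)\<^sup>2) x"
    using sq by (intro real_cond_exp_cmult) auto
  moreover have "AE x in M. real_cond_exp M F (\<lambda>x. \<Sum>j\<in>J. (Y j x)\<^sup>2) x
                   = (\<Sum>j\<in>J. real_cond_exp M F (\<lambda>x. (Y j x)\<^sup>2) x)"
    using sq by (rule real_cond_exp_sum_on)
  ultimately show ?thesis by eventually_elim simp
qed

lemma real_cond_exp_variance:
  assumes X: "integrable M X" and X2: "integrable M (\<lambda>x. (X x)\<^sup>2)"
  shows "AE x in M. real_cond_exp M F (\<lambda>y. (X y - real_cond_exp M F X y)\<^sup>2) x
                    = real_cond_exp M F (\<lambda>y. (X y)\<^sup>2) x - (real_cond_exp M F X x)\<^sup>2"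
proof -
  define B where "B = real_cond_exp M F X"
  have [measurable]: "B \<in> borel_measurable M" "B \<in> borel_measurable F"
    unfolding B_def by auto
  have B2: "integrable M (\<lambda>x. (B x)\<^sup>2)" unfolding B_def
    by (rule integrable_convex_cond_exp[OF X _ _ X2 convex_power2]) auto
  have BX: "integrable M (\<lambda>x. (2 * B x) * X x)"
  proof (rule Bochner_Integration.integrable_bound[of _ "\<lambda>x. (X x)\<^sup>2 + (B x)\<^sup>2"])
    show "AE x in M. norm (2 * B x * X x) \<le> norm ((X x)\<^sup>2 + (B x)\<^sup>2)"
    proof (intro AE_I2)
      fix x
      have "0 \<le> (\<bar>X x\<bar> - \<bar>B x\<bar>)\<^sup>2" by simp
      then show "norm (2 * B x * X x) \<le> norm ((X x)\<^sup>2 + (B x)\<^sup>2)"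
        by (simp add: power2_eq_square abs_mult algebra_simps)
    qed
  qed (use X X2 B2 in auto)
  have square_expand: "(\<lambda>y. (X y - B y)\<^sup>2) = (\<lambda>y. ((X y)\<^sup>2 + (B y)\<^sup>2) - (2 * B y) * X y)"
    by (simp add: power2_diff algebra_simps)
  have "AE x in M. real_cond_exp M F (\<lambda>y. ((X y)\<^sup>2 + (B y)\<^sup>2) - (2 * B y) * X y) x
            = real_cond_exp M F (\<lambda>y. (X y)\<^sup>2 + (B y)\<^sup>2) x - real_cond_exp M F (\<lambda>y. (2 * B y) * X y) x"
    using X2 B2 BX by (intro real_cond_exp_diff) auto
  moreover have "AE x in M. real_cond_exp M F (\<lambda>y. (X y)\<^sup>2 + (B y)\<^sup>2) x
            = real_cond_exp M F (\<lambda>y. (X y)\<^sup>2) x + real_cond_exp M F (\<lambda>y. (B y)\<^sup>2) x"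
    by (rule real_cond_exp_add[OF X2 B2])
  moreover have "AE x in M. real_cond_exp M F (\<lambda>y. (B y)\<^sup>2) x = (B x)\<^sup>2"
    by (rule real_cond_exp_F_meas[OF B2]) auto
  moreover have "AE x in M. real_cond_exp M F (\<lambda>y. (2 * B y) * X y) x = (2 * B x) * B x"
    unfolding B_def by (rule real_cond_exp_mult[OF _ _ BX[unfolded B_def]]) (use X in auto)
  ultimately show ?thesis
    unfolding B_def[symmetric] square_expand by eventually_elim (simp add: power2_eq_square)
qed

lemma real_cond_exp_increment_squared_le:
  assumes MG: "subalgebra M G" and GF: "subalgebra G F"
    and X: "integrable M X" and X2: "integrable M (\<lambda>x. (X x)\<^sup>2)"
  shows "AE x in M. real_cond_exp M F (\<lambda>y. (real_cond_exp M G X y - real_cond_exp M F X y)\<^sup>2) x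
                    \<le> real_cond_exp M F (\<lambda>y. (X y)\<^sup>2) x"
proof -
  interpret G: sigma_finite_subalgebra M G
    by (rule nested_subalg_is_sigma_finite[OF MG GF])
  define A where "A = real_cond_exp M G X"
  have A: "integrable M A"
    unfolding A_def by (rule G.real_cond_exp_int(1)[OF X])
  have A2: "integrable M (\<lambda>x. (A x)\<^sup>2)" unfolding A_def
    by (rule G.integrable_convex_cond_exp[OF X _ _ X2 convex_power2]) auto
  have tower: "AE x in M. real_cond_exp M F A x = real_cond_exp M F X x"
    unfolding A_def by (rule real_cond_exp_nested_subalg[OF MG GF X])
  then have "AE x in M. real_cond_exp M F (\<lambda>y. (A y - real_cond_exp M F X y)\<^sup>2) x
                = real_cond_exp M F (\<lambda>y. (A y - real_cond_exp M F A y)\<^sup>2) x"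
    using A by (intro real_cond_exp_cong) (auto elim: eventually_mono)
  moreover have "AE x in M. real_cond_exp M F (\<lambda>y. (A y - real_cond_exp M F A y)\<^sup>2) x
                   = real_cond_exp M F (\<lambda>y. (A y)\<^sup>2) x - (real_cond_exp M F A x)\<^sup>2"
    by (rule real_cond_exp_variance[OF A A2])
  moreover have "AE x in M. (A x)\<^sup>2 \<le> real_cond_exp M G (\<lambda>y. (X y)\<^sup>2) x"
    unfolding A_def by (rule G.real_cond_exp_jensens_inequality(2)[OF X _ _ X2 convex_power2]) auto
  then have "AE x in M. real_cond_exp M F (\<lambda>y. (A y)\<^sup>2) x
               \<le> real_cond_exp M F (real_cond_exp M G (\<lambda>y. (X y)\<^sup>2)) x"
    by (rule real_cond_exp_mono[OF _ A2 G.real_cond_exp_int(1)[OF X2]])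
  moreover have "AE x in M. real_cond_exp M F (real_cond_exp M G (\<lambda>y. (X y)\<^sup>2)) x
                   = real_cond_exp M F (\<lambda>y. (X y)\<^sup>2) x"
    by (rule real_cond_exp_nested_subalg[OF MG GF X2])
  ultimately show ?thesis
    unfolding A_def by eventually_elim (smt (verit) zero_le_power2)
qed

lemma real_cond_exp_increment_diff_abs_le:
  assumes MG: "subalgebra M G" and GF: "subalgebra G F"
    and s: "integrable M s" and t: "integrable M t"
    and Y: "\<And>j. j \<in> J \<Longrightarrow> integrable M (Y j)"
    and le: "\<And>x. x \<in> space M \<Longrightarrow> \<bar>s x - t x\<bar> \<le> (\<Sum>j\<in>J. Y j x)"
  shows "AE x in M. \<bar>real_cond_exp M G s x - real_cond_exp M F s x
                       - real_cond_exp M G t x + real_cond_exp M F t x\<bar>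
                    \<le> (\<Sum>j\<in>J. real_cond_exp M G (Y j) x) + (\<Sum>j\<in>J. real_cond_exp M F (Y j) x)"
proof -
  interpret G: sigma_finite_subalgebra M G
    by (rule nested_subalg_is_sigma_finite[OF MG GF])
  have Z: "integrable M (\<lambda>x. \<Sum>j\<in>J. Y j x)"
    using Y by auto
  have X: "integrable M (\<lambda>x. s x - t x)"
    using s t by auto
  have "AE x in M. real_cond_exp M G s x - real_cond_exp M G t x = real_cond_exp M G (\<lambda>x. s x - t x) x"
    using G.real_cond_exp_diff[OF s t] by (auto elim: eventually_mono)
  moreover have "AE x in M. real_cond_exp M F s x - real_cond_exp M F t x = real_cond_exp M F (\<lambda>x. s x - t x) x"
    using real_cond_exp_diff[OF s t] by (auto elim: eventually_mono)
  moreover have "AE x in M. \<bar>real_cond_exp M G (\<lambda>x. s x - t x) x\<bar> \<le> real_cond_exp M G (\<lambda>x. \<Sum>j\<in>J. Y j x) x"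
    by (rule G.real_cond_exp_abs_le[OF X Z le])
  moreover have "AE x in M. \<bar>real_cond_exp M F (\<lambda>x. s x - t x) x\<bar> \<le> real_cond_exp M F (\<lambda>x. \<Sum>j\<in>J. Y j x) x"
    by (rule real_cond_exp_abs_le[OF X Z le])
  moreover have "AE x in M. real_cond_exp M G (\<lambda>x. \<Sum>j\<in>J. Y j x) x = (\<Sum>j\<in>J. real_cond_exp M G (Y j) x)"
    by (rule G.real_cond_exp_sum_on[OF Y])
  moreover have "AE x in M. real_cond_exp M F (\<lambda>x. \<Sum>j\<in>J. Y j x) x = (\<Sum>j\<in>J. real_cond_exp M F (Y j) x)"
    by (rule real_cond_exp_sum_on[OF Y])
  ultimately show ?thesis
    by eventually_elim linarith
qed

lemma real_cond_exp_increment_diff_squared_le: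
  assumes MG: "subalgebra M G" and GF: "subalgebra G F"
    and s: "integrable M s" and t: "integrable M t"
    and "card J \<le> m"
    and Y: "\<And>j. j \<in> J \<Longrightarrow> Y j \<in> borel_measurable M"
    and Y2: "\<And>j. j \<in> J \<Longrightarrow> integrable M (\<lambda>x. (Y j x)\<^sup>2)"
    and le: "\<And>x. x \<in> space M \<Longrightarrow> \<bar>s x - t x\<bar> \<le> (\<Sum>j\<in>J. Y j x)"
  shows "AE x in M. real_cond_exp M F (\<lambda>y. (real_cond_exp M G s y - real_cond_exp M F s y
                       - real_cond_exp M G t y + real_cond_exp M F t y)\<^sup>2) x
                    \<le> real m * (\<Sum>j\<in>J. real_cond_exp M F (\<lambda>y. (Y j y)\<^sup>2) x)"
proof -
  interpret G: sigma_finite_subalgebra M G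
    by (rule nested_subalg_is_sigma_finite[OF MG GF])
  define X where "X x = s x - t x" for x
  have X: "integrable M X"
    unfolding X_def using s t by auto
  have Z2: "integrable M (\<lambda>x. (\<Sum>j\<in>J. Y j x)\<^sup>2)"
    using Y Y2 by (rule integrable_sum_squared)
  have X2_le: "(X x)\<^sup>2 \<le> (\<Sum>j\<in>J. Y j x)\<^sup>2" if "x \<in> space M" for x
    using power_mono[OF le[OF that] abs_ge_zero, of 2] by (simp add: X_def)
  have X2: "integrable M (\<lambda>x. (X x)\<^sup>2)"
    using X2_le X by (intro Bochner_Integration.integrable_bound[OF Z2] AE_I2) auto
  have "AE y in M. real_cond_exp M G s y - real_cond_exp M F s y - real_cond_exp M G t y + real_cond_exp M F t y
                     = real_cond_exp M G X y - real_cond_exp M F X y"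
    using G.real_cond_exp_diff[OF s t] real_cond_exp_diff[OF s t]
    unfolding X_def by eventually_elim simp
  then have "AE y in M. (real_cond_exp M G s y - real_cond_exp M F s y - real_cond_exp M G t y + real_cond_exp M F t y)\<^sup>2
                     = (real_cond_exp M G X y - real_cond_exp M F X y)\<^sup>2"
    by eventually_elim simp
  then have "AE x in M. real_cond_exp M F (\<lambda>y. (real_cond_exp M G s y - real_cond_exp M F s y
                          - real_cond_exp M G t y + real_cond_exp M F t y)\<^sup>2) x
               = real_cond_exp M F (\<lambda>y. (real_cond_exp M G X y - real_cond_exp M F X y)\<^sup>2) x"
    by (rule real_cond_exp_cong) auto
  moreover have "AE x in M. real_cond_exp M F (\<lambda>y. (real_cond_exp M G X y - real_cond_exp M F X y)\<^sup>2) x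
                   \<le> real_cond_exp M F (\<lambda>y. (X y)\<^sup>2) x"
    by (rule real_cond_exp_increment_squared_le[OF MG GF X X2])
  moreover have "AE x in M. real_cond_exp M F (\<lambda>y. (X y)\<^sup>2) x \<le> real_cond_exp M F (\<lambda>y. (\<Sum>j\<in>J. Y j y)\<^sup>2) x"
    using X2_le by (intro real_cond_exp_mono AE_I2 X2 Z2)
  moreover have "AE x in M. real_cond_exp M F (\<lambda>y. (\<Sum>j\<in>J. Y j y)\<^sup>2) x
                   \<le> real m * (\<Sum>j\<in>J. real_cond_exp M F (\<lambda>y. (Y j y)\<^sup>2) x)"
    by (rule real_cond_exp_sum_squared_le[OF \<open>card J \<le> m\<close> Y Y2])
  ultimately show ?thesis
    by eventually_elim linarith
qed

end

lemma space_nat_filtration: "space (nat_filtration M eps k) = space M"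
  unfolding nat_filtration_def by (rule space_measure_of_conv)

lemma sets_nat_filtration:
  "sets (nat_filtration M eps k) =
     sigma_sets (space M) (\<Union>j\<in>{1..k}. {eps j -` A \<inter> space M | A. A \<in> sets borel})"
  unfolding nat_filtration_def by (rule sets_measure_of) auto

lemma subalgebra_nat_filtration:
  assumes "\<And>j. j \<in> {1..k} \<Longrightarrow> eps j \<in> borel_measurable M"
  shows "subalgebra M (nat_filtration M eps k)"
  unfolding subalgebra_def space_nat_filtration sets_nat_filtration
  by (auto intro!: sets.sigma_sets_subset measurable_sets assms)

lemma subalgebra_nat_filtration_mono:
  assumes "k \<le> l"
  shows "subalgebra (nat_filtration M eps l) (nat_filtration M eps k)"
  unfolding subalgebra_def space_nat_filtration sets_nat_filtration
  using assms by (simp, intro sigma_sets_mono' UN_mono) auto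

theorem lemma2:
  fixes M :: "'a measure"
    and eps :: "nat \<Rightarrow> 'a \<Rightarrow> 'h::{real_inner, complete_space, second_countable_topology}"
    and W :: "nat \<Rightarrow> real"
    and n m i :: nat
  assumes "prob_space M"
    and meas: "\<And>j. j \<in> {1..n} \<Longrightarrow> eps j \<in> borel_measurable M"
    and sq: "\<And>j. j \<in> {1..n} \<Longrightarrow> integrable M (\<lambda>x. (norm (eps j x))\<^sup>2)"
    and W_nonneg: "\<And>j. j \<in> {1..n} \<Longrightarrow> W j \<ge> 0"
    and "m \<ge> 1"
    and "1 \<le> i" and "i \<le> n"
  shows "(AE x in M. \<bar>real_cond_exp M (nat_filtration M eps i)
                          (\<lambda>y. norm (\<Sum>j=1..n. W j *\<^sub>R eps j y)) x
                 - real_cond_exp M (nat_filtration M eps (i-1))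
                          (\<lambda>y. norm (\<Sum>j=1..n. W j *\<^sub>R eps j y)) x
                 - real_cond_exp M (nat_filtration M eps i)
                          (\<lambda>y. norm ((\<Sum>j=1..n. W j *\<^sub>R eps j y)
                                     - (\<Sum>j=i..min (i+m-1) n. W j *\<^sub>R eps j y))) x
                 + real_cond_exp M (nat_filtration M eps (i-1))
                          (\<lambda>y. norm ((\<Sum>j=1..n. W j *\<^sub>R eps j y)
                                     - (\<Sum>j=i..min (i+m-1) n. W j *\<^sub>R eps j y))) x\<bar>
          \<le> (\<Sum>j=i..min (i+m-1) n. real_cond_exp M (nat_filtration M eps i)
                                      (\<lambda>y. norm (W j *\<^sub>R eps j y)) x)
          + (\<Sum>j=i..min (i+m-1) n. real_cond_exp M (nat_filtration M eps (i-1))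
                                      (\<lambda>y. norm (W j *\<^sub>R eps j y)) x))
       \<and> (AE x in M. real_cond_exp M (nat_filtration M eps (i-1))
              (\<lambda>y. (real_cond_exp M (nat_filtration M eps i)
                          (\<lambda>z. norm (\<Sum>j=1..n. W j *\<^sub>R eps j z)) y
                 - real_cond_exp M (nat_filtration M eps (i-1))
                          (\<lambda>z. norm (\<Sum>j=1..n. W j *\<^sub>R eps j z)) y
                 - real_cond_exp M (nat_filtration M eps i)
                          (\<lambda>z. norm ((\<Sum>j=1..n. W j *\<^sub>R eps j z)
                                     - (\<Sum>j=i..min (i+m-1) n. W j *\<^sub>R eps j z))) y
                 + real_cond_exp M (nat_filtration M eps (i-1))
                          (\<lambda>z. norm ((\<Sum>j=1..n. W j *\<^sub>R eps j z)
                                     - (\<Sum>j=i..min (i+m-1) n. W j *\<^sub>R eps j z))) y)\<^sup>2) x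
          \<le> real m * (\<Sum>j=i..min (i+m-1) n. real_cond_exp M (nat_filtration M eps (i-1))
                                      (\<lambda>y. (norm (W j *\<^sub>R eps j y))\<^sup>2) x))"
proof -
  interpret P: prob_space M by fact
  let ?G = "nat_filtration M eps i" and ?F = "nat_filtration M eps (i-1)"
  define J where "J = {i..min (i+m-1) n}"
  have J: "J \<subseteq> {1..n}" "card J \<le> m"
    using \<open>1 \<le> i\<close> \<open>m \<ge> 1\<close> unfolding J_def by auto
  have G: "subalgebra M ?G" "subalgebra ?G ?F"
    using meas \<open>i \<le> n\<close> by (auto intro!: subalgebra_nat_filtration subalgebra_nat_filtration_mono)
  interpret F: finite_measure_subalgebra M ?F
    using meas \<open>i \<le> n\<close> by unfold_locales (auto intro!: subalgebra_nat_filtration)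
  have eta_meas: "(\<lambda>y. W j *\<^sub>R eps j y) \<in> borel_measurable M" if "j \<in> {1..n}" for j
    using meas[OF that] by measurable
  have eta_sq: "integrable M (\<lambda>y. (norm (W j *\<^sub>R eps j y))\<^sup>2)" if "j \<in> {1..n}" for j
    using integrable_mult_right[OF sq[OF that], of "(W j)\<^sup>2"] by (simp add: power_mult_distrib)
  have eta_norm_meas: "(\<lambda>y. norm (W j *\<^sub>R eps j y)) \<in> borel_measurable M" if "j \<in> {1..n}" for j
    using measurable_compose[OF eta_meas[OF that] borel_measurable_norm] .
  have eta_norm: "integrable M (\<lambda>y. norm (W j *\<^sub>R eps j y))" if "j \<in> {1..n}" for j
    using eta_norm_meas[OF that] eta_sq[OF that] by (rule P.square_integrable_imp_integrable)
  have S: "integrable M (\<lambda>y. norm (\<Sum>j=1..n. W j *\<^sub>R eps j y))"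
    using eta_meas eta_norm by (rule integrable_norm_sum)
  have T: "integrable M (\<lambda>y. norm ((\<Sum>j=1..n. W j *\<^sub>R eps j y) - (\<Sum>j\<in>J. W j *\<^sub>R eps j y)))"
    using integrable_norm_sum[of "{1..n} - J" "\<lambda>j y. W j *\<^sub>R eps j y"] eta_meas eta_norm J(1)
    by (simp add: sum_diff)
  have J_sub: "j \<in> {1..n}" if "j \<in> J" for j
    using J(1) that by blast
  show ?thesis
    unfolding J_def[symmetric]
    using F.real_cond_exp_increment_diff_abs_le[OF G S T eta_norm[OF J_sub] abs_norm_minus_sum_le]
      F.real_cond_exp_increment_diff_squared_le[OF G S T J(2) eta_norm_meas[OF J_sub] eta_sq[OF J_sub]
        abs_norm_minus_sum_le]
    by (rule conjI)
qed

end
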